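(* Let $L,d\geq 1$ and let $G$ be an $(L,d)$-almost-biregular graph. Then $G$ has a non-empty subgraph $G'$ with average degree at least $d/2$ and maximum degree at most $4Ld$.
   Context: A bipartite graph $G$ is $(L,d)$-almost-biregular if it has parts $A$ and $B$ (with $A$ non-empty) such that $d_G(v)=d$ for every $v\in B$, and, writing $D=e(G)/|A|$, we have $D\geq d$ (equivalently $|A|\leq|B|$) and $d_G(u)\leq LD$ for every $u\in A$. Average degree is $2e/|V|$. *)

theory Defs
  imports Complex_Main
begin

definition simple_graph :: "'a set \<Rightarrow> 'a set set \<Rightarrow> bool" where
  "simple_graph V E \<longleftrightarrow> finite V \<and> (\<forall>e\<in>E. e \<subseteq> V \<and> card e = 2)"

definition degree :: "'a set set \<Rightarrow> 'a \<Rightarrow> nat" where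
  "degree E v = card {e\<in>E. v \<in> e}"

definition bipartite_parts :: "'a set \<Rightarrow> 'a set set \<Rightarrow> 'a set \<Rightarrow> 'a set \<Rightarrow> bool" where
  "bipartite_parts V E A B \<longleftrightarrow> A \<union> B = V \<and> A \<inter> B = {} \<and>
     (\<forall>e\<in>E. \<exists>a\<in>A. \<exists>b\<in>B. e = {a, b})"

definition almost_biregular :: "real \<Rightarrow> nat \<Rightarrow> 'a set \<Rightarrow> 'a set set \<Rightarrow> bool" where
  "almost_biregular L d V E \<longleftrightarrow> simple_graph V E \<and>
     (\<exists>A B. bipartite_parts V E A B \<and> A \<noteq> {} \<and>
        (\<forall>v\<in>B. degree E v = d) \<and>
        (let D = real (card E) / real (card A) in
           real d \<le> D \<and> (\<forall>u\<in>A. real (degree E u) \<le> L * D)))"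

definition subgraph :: "'a set \<Rightarrow> 'a set set \<Rightarrow> 'a set \<Rightarrow> 'a set set \<Rightarrow> bool" where
  "subgraph V' E' V E \<longleftrightarrow> V' \<subseteq> V \<and> E' \<subseteq> E \<and> (\<forall>e\<in>E'. e \<subseteq> V')"

definition average_degree :: "'a set \<Rightarrow> 'a set set \<Rightarrow> real" where
  "average_degree V E = 2 * real (card E) / real (card V)"

end

theory Submission
  imports Defs
begin

text \<open>
  Let \<open>a = |A|\<close> and \<open>n = |B|\<close>, so \<open>e(G) = dn\<close> and \<open>a \<le> n\<close>. If \<open>n \<le> 4a\<close>, the whole graph
  works: vertices of \<open>A\<close> have degree at most \<open>Ldn/a \<le> 4Ld\<close>. Otherwise choose \<open>a\<close> vertices
  \<open>S \<subseteq> B\<close> greedily, each time one whose neighbours have the fewest neighbours in \<open>S\<close> so far;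
  this keeps \<open>\<Sum>\<^sub>u |N(u) \<inter> S|\<^sup>2 \<le> da + (4/3)Ld\<^sup>2a\<close>. By Markov's inequality, discarding the
  vertices of \<open>A\<close> with more than \<open>4Ld\<close> neighbours in \<open>S\<close> removes at most half of the \<open>da\<close>
  edges between \<open>A\<close> and \<open>S\<close> (this needs \<open>Ld \<ge> 3/2\<close>; for \<open>d = 1\<close> a single edge suffices),
  leaving at least \<open>da/2\<close> edges on at most \<open>2a\<close> vertices, all of degree at most \<open>4Ld\<close>.
\<close>

lemma exists_le_sum_div_card:
  fixes f :: "'a \<Rightarrow> real"
  assumes "finite X" and "X \<noteq> {}"
  shows "\<exists>x\<in>X. f x \<le> sum f X / real (card X)"
proof (rule ccontr)
  assume "\<not> ?thesis"
  then have "\<forall>x\<in>X. sum f X / real (card X) < f x" by auto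
  then have "(\<Sum>x\<in>X. sum f X / real (card X)) < sum f X"
    using assms by (intro sum_strict_mono) auto
  then show False using assms by simp
qed

lemma sum_card_filter_swap:
  assumes "finite A" and "finite B"
  shows "(\<Sum>u\<in>A. card {b\<in>B. R u b}) = (\<Sum>b\<in>B. card {u\<in>A. R u b})"
  using sum.swap_restrict[OF assms, of "\<lambda>_ _. 1::nat" R] by simp

lemma sum_filter_gt_le_sum_square_div:
  fixes x :: "'a \<Rightarrow> real"
  assumes "finite A" and "T > 0"
  shows "(\<Sum>u\<in>{u\<in>A. T < x u}. x u) \<le> (\<Sum>u\<in>A. (x u)\<^sup>2) / T"
proof -
  have "(\<Sum>u\<in>{u\<in>A. T < x u}. x u) \<le> (\<Sum>u\<in>{u\<in>A. T < x u}. (x u)\<^sup>2 / T)"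
  proof (rule sum_mono)
    fix u assume "u \<in> {u\<in>A. T < x u}"
    then have "x u * T \<le> x u * x u" using \<open>T > 0\<close> by (intro mult_left_mono) auto
    then show "x u \<le> (x u)\<^sup>2 / T" using \<open>T > 0\<close> by (simp add: pos_le_divide_eq power2_eq_square)
  qed
  also have "\<dots> \<le> (\<Sum>u\<in>A. (x u)\<^sup>2 / T)"
    using assms by (intro sum_mono2) auto
  finally show ?thesis by (simp add: sum_divide_distrib)
qed

lemma sum_filter_le_ge_half_sum:
  fixes x :: "'a \<Rightarrow> real"
  assumes "finite A" and "0 < T" and "(\<Sum>u\<in>A. (x u)\<^sup>2) \<le> T * sum x A / 2"
  shows "sum x A / 2 \<le> (\<Sum>u\<in>{u\<in>A. x u \<le> T}. x u)"
proof -
  have "A - {u\<in>A. x u \<le> T} = {u\<in>A. T < x u}" by auto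
  then have "sum x A = (\<Sum>u\<in>{u\<in>A. T < x u}. x u) + (\<Sum>u\<in>{u\<in>A. x u \<le> T}. x u)"
    using sum.subset_diff[of "{u\<in>A. x u \<le> T}" A x] \<open>finite A\<close> by auto
  moreover have "(\<Sum>u\<in>A. (x u)\<^sup>2) / T \<le> sum x A / 2"
    using assms(2,3) by (simp add: pos_divide_le_eq algebra_simps)
  moreover note sum_filter_gt_le_sum_square_div[OF \<open>finite A\<close> \<open>0 < T\<close>, of x]
  ultimately show ?thesis by linarith
qed

lemma sum_square_card_filter_insert:
  assumes "finite A" and "finite S" and "b \<notin> S"
  shows "(\<Sum>u\<in>A. (real (card {c\<in>insert b S. R u c}))\<^sup>2)
       = (\<Sum>u\<in>A. (real (card {c\<in>S. R u c}))\<^sup>2)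
         + 2 * (\<Sum>u\<in>{u\<in>A. R u b}. real (card {c\<in>S. R u c})) + real (card {u\<in>A. R u b})"
proof -
  have "(real (card {c\<in>insert b S. R u c}))\<^sup>2
      = (real (card {c\<in>S. R u c}))\<^sup>2 + (if R u b then 2 * real (card {c\<in>S. R u c}) + 1 else 0)" for u
  proof (cases "R u b")
    case True
    then have "{c\<in>insert b S. R u c} = insert b {c\<in>S. R u c}" by auto
    then show ?thesis using True assms by (simp add: power2_eq_square algebra_simps)
  next
    case False
    then have "{c\<in>insert b S. R u c} = {c\<in>S. R u c}" by auto
    then show ?thesis using False by simp
  qed
  then show ?thesis
    using assms(1) by (simp add: sum.distrib sum.inter_filter[symmetric] sum_distrib_left)
qed

lemma exists_vertex_small_load:
  fixes R :: "'a \<Rightarrow> 'b \<Rightarrow> bool" and M :: real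
  assumes "finite A" and "finite B" and "S \<subseteq> B" and "S \<noteq> B"
    and regular: "\<And>b. b \<in> B \<Longrightarrow> card {u\<in>A. R u b} = d"
    and bounded: "\<And>u. u \<in> A \<Longrightarrow> real (card {b\<in>B. R u b}) \<le> M"
  shows "\<exists>b\<in>B - S. (\<Sum>u\<in>{u\<in>A. R u b}. real (card {c\<in>S. R u c})) \<le> M * (d * card S) / card (B - S)"
proof -
  define x where "x u = real (card {c\<in>S. R u c})" for u
  have "finite S" using assms finite_subset by blast
  have "(\<Sum>u\<in>A. card {c\<in>S. R u c}) = (\<Sum>c\<in>S. card {u\<in>A. R u c})"
    using \<open>finite A\<close> \<open>finite S\<close> by (rule sum_card_filter_swap)
  also have "\<dots> = d * card S" using \<open>S \<subseteq> B\<close> regular by (simp add: subset_iff)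
  finally have sum_x: "(\<Sum>u\<in>A. x u) = d * card S"
    unfolding x_def by (metis of_nat_mult of_nat_sum)
  have "(\<Sum>b\<in>B - S. \<Sum>u\<in>{u\<in>A. R u b}. x u) = (\<Sum>u\<in>A. x u * card {b\<in>B - S. R u b})"
    using sum.swap_restrict[OF \<open>finite A\<close>, of "B - S" "\<lambda>u b. x u" R] \<open>finite B\<close>
    by (simp add: mult.commute)
  also have "\<dots> \<le> (\<Sum>u\<in>A. x u * M)"
  proof (intro sum_mono mult_left_mono)
    fix u assume "u \<in> A"
    have "card {b\<in>B - S. R u b} \<le> card {b\<in>B. R u b}" using \<open>finite B\<close> by (intro card_mono) auto
    then show "real (card {b\<in>B - S. R u b}) \<le> M" using bounded[OF \<open>u \<in> A\<close>] by linarith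
  qed (simp add: x_def)
  also have "\<dots> = M * (d * card S)" using sum_x by (simp add: sum_distrib_left[symmetric] mult.commute)
  finally have average_le: "(\<Sum>b\<in>B - S. \<Sum>u\<in>{u\<in>A. R u b}. x u) / card (B - S)
      \<le> M * (d * card S) / card (B - S)"
    by (simp add: divide_right_mono)
  have "B - S \<noteq> {}" using \<open>S \<subseteq> B\<close> \<open>S \<noteq> B\<close> by blast
  then obtain b where "b \<in> B - S"
    and le_average: "(\<Sum>u\<in>{u\<in>A. R u b}. x u) \<le> (\<Sum>b\<in>B - S. \<Sum>u\<in>{u\<in>A. R u b}. x u) / card (B - S)"
    using exists_le_sum_div_card[of "B - S" "\<lambda>b. \<Sum>u\<in>{u\<in>A. R u b}. x u"] \<open>finite B\<close> by auto
  then show ?thesis using order_trans[OF le_average average_le] unfolding x_def by blast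
qed

text \<open>
  Each step adds a vertex of least load: by \<open>sum_square_card_filter_insert\<close> this raises the
  sum of squares by \<open>d\<close> plus twice the load, and the load is at most \<open>Mdk / (|B| - K)\<close>.
\<close>
lemma exists_subset_small_sum_square:
  fixes R :: "'a \<Rightarrow> 'b \<Rightarrow> bool" and M :: real
  assumes "finite A" and "finite B"
    and regular: "\<And>b. b \<in> B \<Longrightarrow> card {u\<in>A. R u b} = d"
    and bounded: "\<And>u. u \<in> A \<Longrightarrow> real (card {b\<in>B. R u b}) \<le> M"
    and "M \<ge> 0" and "k \<le> K" and "K < card B"
  shows "\<exists>S\<subseteq>B. card S = k \<and>
    (\<Sum>u\<in>A. (real (card {b\<in>S. R u b}))\<^sup>2) \<le> real d * k + M * d / (card B - K) * k\<^sup>2"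
  using \<open>k \<le> K\<close>
proof (induction k)
  case 0
  show ?case by (intro exI[of _ "{}"]) simp
next
  case (Suc k)
  define c where "c = M * d / (card B - K)"
  have "c \<ge> 0" using \<open>M \<ge> 0\<close> by (simp add: c_def)
  define x where "x S u = real (card {b\<in>S. R u b})" for S u
  obtain S where S: "S \<subseteq> B" "card S = k" and Q: "(\<Sum>u\<in>A. (x S u)\<^sup>2) \<le> real d * k + c * k\<^sup>2"
    using Suc by (auto simp: c_def x_def)
  have "finite S" using S \<open>finite B\<close> finite_subset by blast
  have card_rest: "real (card B - K) \<le> real (card (B - S))"
    using S \<open>finite S\<close> Suc.prems by (simp add: card_Diff_subset)
  have "0 < real (card B - K)" using \<open>K < card B\<close> by simp
  moreover from this card_rest have "S \<noteq> B" by auto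
  ultimately obtain b where b: "b \<in> B - S"
    and b_load: "(\<Sum>u\<in>{u\<in>A. R u b}. x S u) \<le> M * (d * k) / card (B - S)"
    using exists_vertex_small_load[OF \<open>finite A\<close> \<open>finite B\<close> \<open>S \<subseteq> B\<close> _ regular bounded] S
    unfolding x_def by blast
  have "M * (d * k) / card (B - S) \<le> c * k"
    using card_rest \<open>0 < real (card B - K)\<close> \<open>M \<ge> 0\<close> by (simp add: c_def frac_le)
  with b_load have b_small: "(\<Sum>u\<in>{u\<in>A. R u b}. x S u) \<le> c * k" by linarith
  have "(\<Sum>u\<in>A. (x (insert b S) u)\<^sup>2) = (\<Sum>u\<in>A. (x S u)\<^sup>2) + 2 * (\<Sum>u\<in>{u\<in>A. R u b}. x S u) + d"
    using sum_square_card_filter_insert[OF \<open>finite A\<close> \<open>finite S\<close>, of b R] b regular by (simp add: x_def)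
  also have "\<dots> \<le> real d * Suc k + c * (Suc k)\<^sup>2"
    using Q b_small \<open>c \<ge> 0\<close> by (simp add: power2_eq_square algebra_simps)
  finally show ?case
    using S b \<open>finite S\<close> by (intro exI[of _ "insert b S"]) (auto simp: c_def x_def)
qed

lemma greedy_square_sum_bound:
  fixes L d a n :: real
  assumes "1 \<le> L" and "2 \<le> d" and "0 < a" and "4 * a < n"
  shows "d * a + L * (d * n / a) * d / (n - a) * a\<^sup>2 \<le> 4 * L * d * (d * a) / 2"
proof -
  have "L * (d * n / a) * d / (n - a) * a\<^sup>2 = L * d\<^sup>2 * a * (n / (n - a))"
    using assms by (simp add: power2_eq_square field_simps)
  also have "\<dots> \<le> L * d\<^sup>2 * a * (4 / 3)"
    using assms by (intro mult_left_mono) (auto simp: pos_divide_le_eq)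
  finally have "L * (d * n / a) * d / (n - a) * a\<^sup>2 \<le> 4 / 3 * (L * d * (d * a))"
    by (simp add: power2_eq_square algebra_simps)
  moreover have "d * a \<le> 2 / 3 * (L * d * (d * a))"
  proof -
    have "3 \<le> 2 * (L * d)" using assms mult_mono[of 1 L 2 d] by simp
    then have "3 * (d * a) \<le> 2 * (L * d) * (d * a)" using assms by (intro mult_right_mono) auto
    then show ?thesis by (simp add: algebra_simps)
  qed
  moreover have "4 * L * d * (d * a) / 2 = 2 * (L * d * (d * a))" by simp
  ultimately show ?thesis by linarith
qed

lemma single_edge_subgraph:
  assumes "simple_graph V E" and "e \<in> E"
  shows "subgraph e {e} V E" and "average_degree e {e} = 1" and "degree {e} v \<le> 1"
proof -
  have "e \<subseteq> V" and "card e = 2" using assms by (auto simp: simple_graph_def)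
  then show "subgraph e {e} V E" and "average_degree e {e} = 1"
    using \<open>e \<in> E\<close> by (auto simp: subgraph_def average_degree_def)
  show "degree {e} v \<le> 1" unfolding degree_def by (rule order_trans[OF card_mono[of "{e}"]]) auto
qed

locale bipartite_graph =
  fixes V :: "'a set" and E :: "'a set set" and A B :: "'a set"
  assumes simple: "simple_graph V E" and parts: "bipartite_parts V E A B"
begin

lemma parts_disjoint: "A \<inter> B = {}"
  using parts by (simp add: bipartite_parts_def)

lemma edgeE:
  assumes "e \<in> E"
  obtains u b where "u \<in> A" and "b \<in> B" and "e = {u, b}"
  using parts assms unfolding bipartite_parts_def by blast

lemma finite_A: "finite A" and finite_B: "finite B"
  using simple parts by (auto simp: simple_graph_def bipartite_parts_def)

lemma finite_E: "finite E"
proof -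
  have "E \<subseteq> Pow V" using simple by (auto simp: simple_graph_def)
  then show ?thesis using simple finite_subset by (auto simp: simple_graph_def)
qed

lemma bipartite_graph_swap: "bipartite_graph V E B A"
proof unfold_locales
  show "simple_graph V E" by (rule simple)
  show "bipartite_parts V E B A"
    using parts unfolding bipartite_parts_def by (metis Int_commute Un_commute insert_commute)
qed

lemma degree_eq_card_neighbours:
  assumes "u \<in> A"
  shows "degree E u = card {b\<in>B. {u, b} \<in> E}"
proof -
  have "{e\<in>E. u \<in> e} \<subseteq> (\<lambda>b. {u, b}) ` {b\<in>B. {u, b} \<in> E}"
  proof
    fix e assume e: "e \<in> {e\<in>E. u \<in> e}"
    then obtain u' b where "u' \<in> A" "b \<in> B" "e = {u', b}" by (blast elim: edgeE)
    then show "e \<in> (\<lambda>b. {u, b}) ` {b\<in>B. {u, b} \<in> E}"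
      using e assms parts_disjoint by auto
  qed
  then have "{e\<in>E. u \<in> e} = (\<lambda>b. {u, b}) ` {b\<in>B. {u, b} \<in> E}" by auto
  moreover have "inj_on (\<lambda>b. {u, b}) {b\<in>B. {u, b} \<in> E}"
    using assms parts_disjoint by (auto simp: inj_on_def doubleton_eq_iff)
  ultimately show ?thesis by (simp add: degree_def card_image)
qed

lemma card_edges_eq_sum_degree: "card E = (\<Sum>u\<in>A. degree E u)"
proof -
  have "E = (\<Union>u\<in>A. {e\<in>E. u \<in> e})" by (auto elim: edgeE)
  also have "card \<dots> = (\<Sum>u\<in>A. card {e\<in>E. u \<in> e})"
    using finite_A finite_E parts_disjoint by (intro card_UN_disjoint) (auto elim!: edgeE)
  finally show ?thesis by (simp add: degree_def)
qed

lemma bipartite_graph_induced: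
  assumes "A' \<subseteq> A" and "S \<subseteq> B"
  shows "bipartite_graph (A' \<union> S) {e\<in>E. e \<subseteq> A' \<union> S} A' S"
proof unfold_locales
  show "simple_graph (A' \<union> S) {e\<in>E. e \<subseteq> A' \<union> S}"
    using simple assms finite_A finite_B rev_finite_subset[of A A'] rev_finite_subset[of B S]
    by (auto simp: simple_graph_def)
  show "bipartite_parts (A' \<union> S) {e\<in>E. e \<subseteq> A' \<union> S} A' S"
    unfolding bipartite_parts_def
  proof (intro conjI ballI)
    show "A' \<inter> S = {}" using assms parts_disjoint by blast
    fix e assume e: "e \<in> {e\<in>E. e \<subseteq> A' \<union> S}"
    then obtain u b where ub: "u \<in> A" "b \<in> B" "e = {u, b}" by (blast elim: edgeE)
    then have "u \<in> A'" "b \<in> S" using e assms parts_disjoint by auto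
    then show "\<exists>u\<in>A'. \<exists>b\<in>S. e = {u, b}" using ub by blast
  qed simp
qed

end

definition dense_low_degree_subgraph ::
    "real \<Rightarrow> real \<Rightarrow> 'a set \<Rightarrow> 'a set set \<Rightarrow> 'a set \<Rightarrow> 'a set set \<Rightarrow> bool" where
  "dense_low_degree_subgraph \<alpha> \<Delta> V E V' E' \<longleftrightarrow>
     subgraph V' E' V E \<and> V' \<noteq> {} \<and> \<alpha> \<le> average_degree V' E' \<and>
     (\<forall>v\<in>V'. real (degree E' v) \<le> \<Delta>)"

locale almost_biregular_graph = bipartite_graph +
  fixes L :: real and d :: nat
  assumes A_nonempty: "A \<noteq> {}"
    and degree_B: "b \<in> B \<Longrightarrow> degree E b = d"
    and d_le_density: "real d \<le> real (card E) / real (card A)"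
    and degree_A_le: "u \<in> A \<Longrightarrow> real (degree E u) \<le> L * (real (card E) / real (card A))"

lemma almost_biregularE:
  assumes "almost_biregular L d V E"
  obtains A B where "almost_biregular_graph V E A B L d"
  using assms unfolding almost_biregular_def Let_def
  by (metis almost_biregular_graph.intro almost_biregular_graph_axioms.intro bipartite_graph.intro)

context almost_biregular_graph
begin

lemma card_A_pos: "0 < card A"
  using A_nonempty finite_A by (simp add: card_gt_0_iff)

lemma card_neighbours_B:
  assumes "b \<in> B"
  shows "card {u\<in>A. {u, b} \<in> E} = d"
proof -
  interpret swapped: bipartite_graph V E B A by (rule bipartite_graph_swap)
  show ?thesis
    using swapped.degree_eq_card_neighbours[OF assms] degree_B[OF assms] by (simp add: insert_commute)
qed

lemma sum_card_neighbours_in: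
  assumes "S \<subseteq> B"
  shows "(\<Sum>u\<in>A. card {b\<in>S. {u, b} \<in> E}) = d * card S"
proof -
  have "(\<Sum>u\<in>A. card {b\<in>S. {u, b} \<in> E}) = (\<Sum>b\<in>S. card {u\<in>A. {u, b} \<in> E})"
    using finite_A finite_B assms by (intro sum_card_filter_swap) (auto intro: finite_subset)
  also have "\<dots> = d * card S"
    using assms card_neighbours_B by (simp add: subset_iff)
  finally show ?thesis .
qed

lemma card_E: "card E = d * card B"
  using bipartite_graph_swap bipartite_graph.card_edges_eq_sum_degree degree_B by fastforce

lemma card_A_le_card_B:
  assumes "1 \<le> d"
  shows "card A \<le> card B"
proof -
  have "real d * card A \<le> real d * card B"
    using d_le_density card_A_pos by (simp add: card_E pos_le_divide_eq)
  then show ?thesis using assms by simp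
qed

lemma whole_graph_dense_low_degree:
  assumes "1 \<le> L" and "1 \<le> d" and "card B \<le> 4 * card A"
  shows "dense_low_degree_subgraph (real d / 2) (4 * L * real d) V E V E"
proof -
  have V: "V = A \<union> B" and "A \<inter> B = {}" using parts by (auto simp: bipartite_parts_def)
  then have card_V: "card V = card A + card B"
    using finite_A finite_B by (simp add: card_Un_disjoint)
  have "real d / 2 * card V \<le> real d / 2 * (2 * card B)"
    using card_A_le_card_B \<open>1 \<le> d\<close> by (intro mult_left_mono) (simp_all add: card_V)
  also have "\<dots> \<le> 2 * real (card E)" by (simp add: card_E)
  finally have avg: "real d / 2 \<le> average_degree V E"
    using card_A_pos by (simp add: average_degree_def card_V pos_le_divide_eq)
  have "real d * card B \<le> real d * (4 * card A)"
    using \<open>card B \<le> 4 * card A\<close> by (intro mult_left_mono) auto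
  then have "real (card E) / card A \<le> 4 * d"
    using card_A_pos by (simp add: card_E pos_divide_le_eq algebra_simps)
  then have density: "L * (real (card E) / card A) \<le> 4 * L * d"
    using \<open>1 \<le> L\<close> mult_left_mono[of "real (card E) / card A" "4 * d" L] by simp
  have "real (degree E v) \<le> 4 * L * d" if "v \<in> V" for v
  proof (cases "v \<in> A")
    case True
    then show ?thesis using degree_A_le density by fastforce
  next
    case False
    then have "degree E v = d" using that V degree_B by auto
    then show ?thesis using \<open>1 \<le> L\<close> mult_right_mono[of 1 "4 * L" "real d"] by simp
  qed
  then show ?thesis
    using avg simple A_nonempty V
    by (auto simp: dense_low_degree_subgraph_def subgraph_def simple_graph_def)
qed

lemma single_edge_dense_low_degree:
  assumes "1 \<le> L" and "d = 1"
  shows "\<exists>V' E'. dense_low_degree_subgraph (real d / 2) (4 * L * real d) V E V' E'"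
proof -
  have "card E > 0"
    using card_A_pos card_A_le_card_B \<open>d = 1\<close> by (simp add: card_E)
  then obtain e where "e \<in> E" by fastforce
  note edge = single_edge_subgraph[OF simple this]
  have "e \<noteq> {}" using simple \<open>e \<in> E\<close> by (auto simp: simple_graph_def)
  moreover have "real (degree {e} v) \<le> 4 * L * d" for v
    using edge(3)[of v] assms by simp
  ultimately have "dense_low_degree_subgraph (real d / 2) (4 * L * real d) V E e {e}"
    using edge(1,2) assms by (simp add: dense_low_degree_subgraph_def)
  then show ?thesis by blast
qed

lemma prune_heavy_vertices:
  fixes T :: real
  assumes "S \<subseteq> B" and "S \<noteq> {}" and "card A \<le> card S" and "0 < T" and "real d \<le> T"
    and small: "(\<Sum>u\<in>A. (real (card {b\<in>S. {u, b} \<in> E}))\<^sup>2) \<le> T * (d * card S) / 2"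
  shows "\<exists>V' E'. dense_low_degree_subgraph (real d / 2) T V E V' E'"
proof -
  define x where "x u = real (card {b\<in>S. {u, b} \<in> E})" for u
  define A' where "A' = {u\<in>A. x u \<le> T}"
  define V' where "V' = A' \<union> S"
  define E' where "E' = {e\<in>E. e \<subseteq> V'}"
  have "A' \<subseteq> A" by (auto simp: A'_def)
  interpret pruned: bipartite_graph V' E' A' S
    unfolding V'_def E'_def using \<open>A' \<subseteq> A\<close> \<open>S \<subseteq> B\<close> by (rule bipartite_graph_induced)
  have degree_pruned: "degree E' u = x u" if "u \<in> A'" for u
  proof -
    have "{b\<in>S. {u, b} \<in> E'} = {b\<in>S. {u, b} \<in> E}" using that by (auto simp: E'_def V'_def)
    then show ?thesis using pruned.degree_eq_card_neighbours[OF that] by (simp add: x_def)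
  qed
  have "(\<Sum>u\<in>A. x u) = real d * card S"
    using arg_cong[OF sum_card_neighbours_in[OF \<open>S \<subseteq> B\<close>], of real] by (simp add: x_def)
  then have "real d * card S / 2 \<le> (\<Sum>u\<in>A'. x u)"
    using sum_filter_le_ge_half_sum[OF finite_A \<open>0 < T\<close>, of x] small
    by (simp add: A'_def x_def)
  also have "\<dots> = real (card E')"
    using pruned.card_edges_eq_sum_degree degree_pruned by simp
  finally have many_edges: "real d * card S / 2 \<le> real (card E')" .
  have "card V' \<le> card A' + card S" unfolding V'_def by (rule card_Un_le)
  moreover have "card A' \<le> card A" using card_mono[OF finite_A \<open>A' \<subseteq> A\<close>] .
  ultimately have "real d / 2 * card V' \<le> real d / 2 * (2 * card S)"
    using \<open>card A \<le> card S\<close> by (intro mult_left_mono) auto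
  also have "\<dots> \<le> 2 * real (card E')" using many_edges by simp
  finally have "real d / 2 * card V' \<le> 2 * real (card E')" .
  moreover have "0 < card V'"
    using pruned.finite_A pruned.finite_B \<open>S \<noteq> {}\<close> by (simp add: V'_def card_gt_0_iff)
  ultimately have "real d / 2 \<le> average_degree V' E'"
    by (simp add: average_degree_def pos_le_divide_eq)
  moreover have "real (degree E' v) \<le> T" if "v \<in> V'" for v
  proof (cases "v \<in> A'")
    case True
    then show ?thesis using degree_pruned by (simp add: A'_def)
  next
    case False
    then have "v \<in> B" using that \<open>S \<subseteq> B\<close> by (auto simp: V'_def)
    have "degree E' v \<le> degree E v"
      unfolding degree_def E'_def using finite_E by (intro card_mono) auto
    then show ?thesis using degree_B[OF \<open>v \<in> B\<close>] \<open>real d \<le> T\<close> by simp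
  qed
  moreover have "subgraph V' E' V E"
    using \<open>A' \<subseteq> A\<close> \<open>S \<subseteq> B\<close> parts by (auto simp: subgraph_def V'_def E'_def bipartite_parts_def)
  ultimately show ?thesis
    using \<open>S \<noteq> {}\<close> unfolding dense_low_degree_subgraph_def V'_def by blast
qed

lemma greedy_dense_low_degree:
  assumes "1 \<le> L" and "2 \<le> d" and "4 * card A < card B"
  shows "\<exists>V' E'. dense_low_degree_subgraph (real d / 2) (4 * L * real d) V E V' E'"
proof -
  define M where "M = L * (real (card E) / card A)"
  have "0 \<le> M" using \<open>1 \<le> L\<close> by (simp add: M_def)
  have "real (card {b\<in>B. {u, b} \<in> E}) \<le> M" if "u \<in> A" for u
    using degree_A_le[OF that] degree_eq_card_neighbours[OF that] by (simp add: M_def)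
  then obtain S where "S \<subseteq> B" and "card S = card A"
    and small: "(\<Sum>u\<in>A. (real (card {b\<in>S. {u, b} \<in> E}))\<^sup>2)
      \<le> real d * card A + M * d / (card B - card A) * (card A)\<^sup>2"
    using exists_subset_small_sum_square[where R = "\<lambda>u b. {u, b} \<in> E" and k = "card A" and K = "card A",
        OF finite_A finite_B card_neighbours_B _ \<open>0 \<le> M\<close>] \<open>4 * card A < card B\<close>
    by auto
  have "M * d / (card B - card A) * (card A)\<^sup>2
      = L * (real d * card B / card A) * d / (real (card B) - card A) * (card A)\<^sup>2"
    using \<open>4 * card A < card B\<close> by (simp add: M_def card_E of_nat_diff)
  then have "(\<Sum>u\<in>A. (real (card {b\<in>S. {u, b} \<in> E}))\<^sup>2) \<le> 4 * L * d * (d * card S) / 2"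
    using small greedy_square_sum_bound[OF \<open>1 \<le> L\<close> _ _ , of d "card A" "card B"]
      \<open>2 \<le> d\<close> card_A_pos \<open>4 * card A < card B\<close> \<open>card S = card A\<close> by simp
  moreover have "S \<noteq> {}" using \<open>card S = card A\<close> card_A_pos by auto
  moreover have "0 < 4 * L * real d" and "real d \<le> 4 * L * real d"
    using \<open>1 \<le> L\<close> \<open>2 \<le> d\<close> mult_right_mono[of 1 "4 * L" "real d"] by auto
  ultimately show ?thesis
    using prune_heavy_vertices[OF \<open>S \<subseteq> B\<close>] \<open>card S = card A\<close> by simp
qed

lemma exists_dense_low_degree_subgraph:
  assumes "1 \<le> L" and "1 \<le> d"
  shows "\<exists>V' E'. dense_low_degree_subgraph (real d / 2) (4 * L * real d) V E V' E'"
proof (cases "card B \<le> 4 * card A")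
  case True
  then show ?thesis using whole_graph_dense_low_degree assms by blast
next
  case False
  then show ?thesis
    using single_edge_dense_low_degree greedy_dense_low_degree assms
    by (cases "d = 1") auto
qed

end

theorem lemma3p7:
  fixes L :: real and d :: nat and V :: "'a set" and E :: "'a set set"
  assumes "L \<ge> 1" and "d \<ge> 1"
    and "almost_biregular L d V E"
  shows "\<exists>V' E'. subgraph V' E' V E \<and> V' \<noteq> {} \<and>
           average_degree V' E' \<ge> real d / 2 \<and>
           (\<forall>v\<in>V'. real (degree E' v) \<le> 4 * L * real d)"
proof -
  obtain A B where "almost_biregular_graph V E A B L d"
    using assms(3) by (rule almost_biregularE)
  then interpret almost_biregular_graph V E A B L d .
  show ?thesis
    using exists_dense_low_degree_subgraph[OF assms(1,2)]
    unfolding dense_low_degree_subgraph_def .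
qed

end
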